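(* Let $X$ be a spectrally negative Lévy process with scale function $W$ (as in the context). Let $\omega$ be a nonnegative locally bounded measurable function on $\mathbb{R}$, fix $u\in\mathbb{R}$ and put $\omega_u(z):=\omega(u-z)$. Let $W^{(\omega)}$ and $W^{(\omega_u)}$ be the $\omega$-scale function and the $\omega_u$-scale function respectively, i.e. the unique locally bounded solutions of \[ W^{(\omega)}(x,y)=W(x-y)+\int_y^xW(x-z)\omega(z)W^{(\omega)}(z,y)dz,\qquad W^{(\omega_u)}(x,y)=W(x-y)+\int_y^xW(x-z)\omega(u-z)W^{(\omega_u)}(z,y)dz \] for $x,y\in\mathbb{R}$. Then $W^{(\omega_u)}(u-y,u-x)=W^{(\omega)}(x,y)$ for all $x,y\in\mathbb{R}$.
   Context: $X$ is a spectrally negative Lévy process with Laplace exponent $\psi(\lambda)=\log\mathbb{E}e^{\lambda X_1}$; its scale function $W:\mathbb{R}\to[0,\infty)$ satisfies $W(x)=0$ for $x<0$, is increasing on $[0,\infty)$, and $\int_0^\infty e^{-\lambda x}W(x)dx=1/\psi(\lambda)$ for $\lambda$ large enough. It is known that, for nonnegative locally bounded measurable $\varpi$, the unique locally bounded solution $W^{(\varpi)}$ of $W^{(\varpi)}(x,y)=W(x-y)+\int_y^xW(x-z)\varpi(z)W^{(\varpi)}(z,y)dz$ is also the unique locally bounded solution of $W^{(\varpi)}(x,y)=W(x-y)+\int_y^xW^{(\varpi)}(x,z)\varpi(z)W(z-y)dz$. *)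

theory Defs
  imports "HOL-Analysis.Analysis"
begin

text \<open>Laplace exponent of a spectrally negative Levy process, via the Levy-Khintchine
  formula: drift gamma, Gaussian coefficient sigma, Levy measure Pi carried by (-inf,0)
  with finite integral of min 1 x^2; processes with monotone (decreasing) paths are
  excluded (bounded variation with nonpositive drift).\<close>
definition snlp_laplace_exponent :: "(real \<Rightarrow> real) \<Rightarrow> bool" where
  "snlp_laplace_exponent \<psi> \<longleftrightarrow>
     (\<exists>(\<gamma>::real) (\<sigma>::real) (\<nu>::real measure).
        sets \<nu> = sets borel \<and>
        emeasure \<nu> {0..} = 0 \<and>
        (\<integral>\<^sup>+ x. ennreal (min 1 (x\<^sup>2)) \<partial>\<nu>) < \<infinity> \<and>
        \<not> (\<sigma> = 0 \<and>
            (\<integral>\<^sup>+ x. ennreal (indicator {-1<..<0} x * \<bar>x\<bar>) \<partial>\<nu>) < \<infinity> \<and>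
            \<gamma> + (\<integral> x. indicator {-1<..<0} x * \<bar>x\<bar> \<partial>\<nu>) \<le> 0) \<and>
        (\<forall>s\<ge>0. \<psi> s = \<gamma> * s + \<sigma>\<^sup>2 / 2 * s\<^sup>2
              + (\<integral> x. exp (s * x) - 1 - s * x * indicator {-1<..} x \<partial>\<nu>)))"

definition scale_function :: "(real \<Rightarrow> real) \<Rightarrow> (real \<Rightarrow> real) \<Rightarrow> bool" where
  "scale_function \<psi> W \<longleftrightarrow>
     (\<forall>x. 0 \<le> W x) \<and> (\<forall>x<0. W x = 0) \<and> mono_on {0..} W \<and>
     (\<exists>s0. \<forall>s>s0. ((\<lambda>x. exp (- s * x) * W x) has_integral 1 / \<psi> s) {0..})"

definition locally_bounded :: "('a::metric_space \<Rightarrow> real) \<Rightarrow> bool" where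
  "locally_bounded f \<longleftrightarrow> (\<forall>K. compact K \<longrightarrow> bounded (f ` K))"

definition omega_scale_solution ::
  "(real \<Rightarrow> real) \<Rightarrow> (real \<Rightarrow> real) \<Rightarrow> (real \<Rightarrow> real \<Rightarrow> real) \<Rightarrow> bool" where
  "omega_scale_solution W v Wv \<longleftrightarrow>
     locally_bounded (\<lambda>(x, y). Wv x y) \<and>
     (\<forall>y. (\<lambda>x. Wv x y) \<in> borel_measurable borel) \<and>
     (\<forall>x y. Wv x y = W (x - y) + (LINT z:{y..x}|lborel. W (x - z) * v z * Wv z y))"

end

theory Submission
  imports Defs "HOL-Analysis.Analysis"
begin

(* For y \<le> x, A s = W\<omega>(s, y) solves the forward Volterra equation
   A s = W (s - y) + \<integral>\<^sub>y\<^sup>s W (s - r) \<omega> r A r dr, while reflecting the \<omega>\<^sub>u-equation through u shows that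
   B z = W\<omega>\<^sub>u(u - z, u - x) solves the backward equation B z = W (x - z) + \<integral>\<^sub>z\<^sup>x B r \<omega> r W (r - z) dr.
   Integrating B z \<omega> z W (z - s) \<omega> s A s over the triangle y \<le> s \<le> z \<le> x in both orders and
   substituting each equation into the inner integral gives A x = B y.
   For y > x both sides reduce to W (x - y). *)

lemma set_integrable_Icc_bounded:
  fixes f :: "real \<Rightarrow> real"
  assumes "f \<in> borel_measurable borel" and "\<forall>s\<in>{a..b}. \<bar>f s\<bar> \<le> C"
  shows "set_integrable lborel {a..b} f"
  unfolding set_integrable_def
  using assms by (intro integrableI_bounded_set_indicator[where B=C]) (auto simp: emeasure_lborel_Icc_eq)

lemma set_integral_Icc_reflect:
  fixes f :: "real \<Rightarrow> real"
  shows "(LINT r:{a..b}|lborel. f r) = (LINT t:{u-b..u-a}|lborel. f (u - t))"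
proof -
  have "(LINT r:{a..b}|lborel. f r) = (\<integral>r. indicator {a..b} r * f r \<partial>lborel)"
    by (simp add: set_lebesgue_integral_def)
  also have "\<dots> = \<bar>-1\<bar> *\<^sub>R (\<integral>t. indicator {a..b} (u + -1 * t) * f (u + -1 * t) \<partial>lborel)"
    by (rule lborel_integral_real_affine) simp
  also have "\<dots> = (\<integral>t. indicator {u-b..u-a} t * f (u - t) \<partial>lborel)"
    by (simp, intro Bochner_Integration.integral_cong) (auto simp: indicator_def)
  finally show ?thesis
    by (simp add: set_lebesgue_integral_def)
qed

lemma set_integral_triangle_swap:
  fixes G :: "real \<Rightarrow> real \<Rightarrow> real"
  assumes [measurable]: "(\<lambda>(z, s). G z s) \<in> borel_measurable (borel \<Otimes>\<^sub>M borel)"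
    and bound: "\<And>z s. a \<le> s \<Longrightarrow> s \<le> z \<Longrightarrow> z \<le> b \<Longrightarrow> \<bar>G z s\<bar> \<le> C"
  shows "(LINT z:{a..b}|lborel. LINT s:{a..z}|lborel. G z s)
       = (LINT s:{a..b}|lborel. LINT z:{s..b}|lborel. G z s)"
proof -
  define T where "T = {p. a \<le> snd p \<and> snd p \<le> fst p \<and> fst p \<le> (b::real)}"
  define F where "F p = indicator T p * (\<lambda>(z, s). G z s) p" for p
  have "closed T"
    unfolding T_def by (intro closed_Collect_conj closed_Collect_le continuous_intros)
  then have [measurable]: "T \<in> sets (borel \<Otimes>\<^sub>M borel)"
    unfolding borel_prod by (rule borel_closed)
  have [measurable]: "F \<in> borel_measurable (lborel \<Otimes>\<^sub>M lborel)"
    unfolding F_def measurable_cong_sets[OF sets_pair_measure_cong[OF sets_lborel sets_lborel] refl]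
    by measurable
  have "integrable (lborel \<Otimes>\<^sub>M lborel) F"
  proof (rule integrableI_bounded_set[where A="{a..b} \<times> {a..b}" and B=C])
    show "emeasure (lborel \<Otimes>\<^sub>M lborel) ({a..b} \<times> {a..b}) < \<infinity>"
      by (simp add: lborel.emeasure_pair_measure_Times ennreal_mult_less_top emeasure_lborel_Icc_eq)
    show "AE p in lborel \<Otimes>\<^sub>M lborel. p \<in> {a..b} \<times> {a..b} \<longrightarrow> norm (F p) \<le> C"
      using bound bound[of a a] by (intro AE_I2) (force simp: F_def T_def indicator_def)
    show "AE p in lborel \<Otimes>\<^sub>M lborel. p \<notin> {a..b} \<times> {a..b} \<longrightarrow> F p = 0"
      by (intro AE_I2) (auto simp: F_def T_def indicator_def)
  qed simp_all
  then have "(\<integral>s. (\<integral>z. F (z, s) \<partial>lborel) \<partial>lborel) = (\<integral>z. (\<integral>s. F (z, s) \<partial>lborel) \<partial>lborel)"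
    using lborel_pair.Fubini_integral[of "\<lambda>z s. F (z, s)"] by simp
  moreover have "(\<integral>s. F (z, s) \<partial>lborel) = indicator {a..b} z * (LINT s:{a..z}|lborel. G z s)" for z
    unfolding set_lebesgue_integral_def
    by (subst integral_mult_right_zero[symmetric], intro Bochner_Integration.integral_cong)
       (auto simp: F_def T_def indicator_def)
  moreover have "(\<integral>z. F (z, s) \<partial>lborel) = indicator {a..b} s * (LINT z:{s..b}|lborel. G z s)" for s
    unfolding set_lebesgue_integral_def
    by (subst integral_mult_right_zero[symmetric], intro Bochner_Integration.integral_cong)
       (auto simp: F_def T_def indicator_def)
  ultimately show ?thesis
    by (simp add: set_lebesgue_integral_def)
qed

lemma Volterra_forward_backward_eq:
  fixes A B K w :: "real \<Rightarrow> real"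
  assumes [measurable]: "A \<in> borel_measurable borel" "B \<in> borel_measurable borel"
      "K \<in> borel_measurable borel" "w \<in> borel_measurable borel"
    and "y \<le> x"
    and "bounded (A ` {y..x})" "bounded (B ` {y..x})" "bounded (w ` {y..x})" "bounded (K ` {0..x-y})"
    and forward: "\<forall>s\<in>{y..x}. A s = K (s - y) + (LINT r:{y..s}|lborel. K (s - r) * w r * A r)"
    and backward: "\<forall>z\<in>{y..x}. B z = K (x - z) + (LINT r:{z..x}|lborel. B r * w r * K (r - z))"
  shows "A x = B y"
proof -
  have "bounded (A ` {y..x} \<union> B ` {y..x} \<union> w ` {y..x} \<union> K ` {0..x-y})"
    using assms(6-9) by simp
  then obtain M where "\<forall>v\<in>A ` {y..x} \<union> B ` {y..x} \<union> w ` {y..x} \<union> K ` {0..x-y}. \<bar>v\<bar> \<le> M"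
    unfolding bounded_iff real_norm_def by blast
  then have M: "\<And>s. s \<in> {y..x} \<Longrightarrow> \<bar>A s\<bar> \<le> M \<and> \<bar>B s\<bar> \<le> M \<and> \<bar>w s\<bar> \<le> M"
    and MK: "\<And>t. t \<in> {0..x-y} \<Longrightarrow> \<bar>K t\<bar> \<le> M"
    by blast+
  have "\<bar>B z * w z * K (z - s) * w s * A s\<bar> \<le> M * M * M * M * M" if "y \<le> s" "s \<le> z" "z \<le> x" for z s
  proof -
    have "\<bar>B z\<bar> \<le> M" "\<bar>w z\<bar> \<le> M" "\<bar>K (z - s)\<bar> \<le> M" "\<bar>w s\<bar> \<le> M" "\<bar>A s\<bar> \<le> M"
      using M MK that by auto
    then show ?thesis
      unfolding abs_mult by (intro mult_mono) auto
  qed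
  then have swap: "(LINT z:{y..x}|lborel. LINT s:{y..z}|lborel. B z * w z * K (z - s) * w s * A s)
      = (LINT s:{y..x}|lborel. LINT z:{s..x}|lborel. B z * w z * K (z - s) * w s * A s)"
    by (intro set_integral_triangle_swap) measurable
  have "0 \<le> M"
    using M[of x] \<open>y \<le> x\<close> by force
  have int: "set_integrable lborel {y..x} (\<lambda>z. B z * w z * A z)"
    "set_integrable lborel {y..x} (\<lambda>z. B z * w z * K (z - y))"
    "set_integrable lborel {y..x} (\<lambda>z. K (x - z) * w z * A z)"
    by (rule set_integrable_Icc_bounded[where C="M * M * M"], measurable,
        use M MK \<open>0 \<le> M\<close> in \<open>auto simp: abs_mult intro!: mult_mono\<close>)+
  define J where "J = (LINT z:{y..x}|lborel. B z * w z * A z)"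
  have "(LINT z:{y..x}|lborel. LINT s:{y..z}|lborel. B z * w z * K (z - s) * w s * A s)
      = (LINT z:{y..x}|lborel. B z * w z * A z - B z * w z * K (z - y))"
  proof (intro set_lebesgue_integral_cong allI impI)
    fix z assume "z \<in> {y..x}"
    have "(LINT s:{y..z}|lborel. B z * w z * K (z - s) * w s * A s)
        = B z * w z * (LINT s:{y..z}|lborel. K (z - s) * w s * A s)"
      by (simp add: mult.assoc)
    also have "\<dots> = B z * w z * (A z - K (z - y))"
      using forward \<open>z \<in> {y..x}\<close> by (simp add: eq_diff_eq')
    finally show "(LINT s:{y..z}|lborel. B z * w z * K (z - s) * w s * A s)
        = B z * w z * A z - B z * w z * K (z - y)"
      by (simp add: right_diff_distrib)
  qed simp
  also have "\<dots> = J - (B y - K (x - y))"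
    using int backward \<open>y \<le> x\<close> by (simp add: J_def set_integral_diff)
  finally have L: "(LINT z:{y..x}|lborel. LINT s:{y..z}|lborel. B z * w z * K (z - s) * w s * A s)
      = J - (B y - K (x - y))" .
  have "(LINT s:{y..x}|lborel. LINT z:{s..x}|lborel. B z * w z * K (z - s) * w s * A s)
      = (LINT s:{y..x}|lborel. B s * w s * A s - K (x - s) * w s * A s)"
  proof (intro set_lebesgue_integral_cong allI impI)
    fix s assume "s \<in> {y..x}"
    have "(LINT z:{s..x}|lborel. B z * w z * K (z - s) * w s * A s)
        = (LINT z:{s..x}|lborel. B z * w z * K (z - s)) * w s * A s"
      by simp
    also have "\<dots> = (B s - K (x - s)) * w s * A s"
      using backward \<open>s \<in> {y..x}\<close> by (simp add: eq_diff_eq')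
    finally show "(LINT z:{s..x}|lborel. B z * w z * K (z - s) * w s * A s)
        = B s * w s * A s - K (x - s) * w s * A s"
      by (simp add: left_diff_distrib)
  qed simp
  also have "\<dots> = J - (A x - K (x - y))"
    using int forward \<open>y \<le> x\<close> by (simp add: J_def set_integral_diff)
  finally show ?thesis
    using swap L by simp
qed

lemma bounded_image_locally_bounded:
  assumes "locally_bounded f" and "compact K" and "continuous_on K g"
  shows "bounded ((\<lambda>t. f (g t)) ` K)"
  using assms compact_continuous_image unfolding locally_bounded_def by (metis image_image)

lemma scale_function_mono:
  assumes "scale_function \<psi> W"
  shows "mono W"
proof (rule monoI)
  fix a b :: real
  assume "a \<le> b"
  have "0 \<le> W t" "t < 0 \<Longrightarrow> W t = 0" and "mono_on {0..} W" for t
    using assms unfolding scale_function_def by auto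
  then show "W a \<le> W b"
    using \<open>a \<le> b\<close> by (cases "a < 0") (auto intro: mono_onD)
qed

lemma omega_scale_solution_below_diagonal:
  assumes "omega_scale_solution W v V" and "x < y"
  shows "V x y = W (x - y)"
proof -
  have "V x y = W (x - y) + (LINT z:{y..x}|lborel. W (x - z) * v z * V z y)"
    using assms(1) unfolding omega_scale_solution_def by blast
  with \<open>x < y\<close> show ?thesis
    by (simp add: set_lebesgue_integral_def)
qed

lemma omega_scale_solution_reflect:
  assumes "omega_scale_solution W (\<lambda>z. w (u - z)) V"
  shows "V (u - z) (u - x)
       = W (x - z) + (LINT r:{z..x}|lborel. V (u - r) (u - x) * w r * W (r - z))"
proof -
  have "V (u - z) (u - x)
      = W (u - z - (u - x)) + (LINT r:{u - x..u - z}|lborel. W (u - z - r) * w (u - r) * V r (u - x))"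
    using assms unfolding omega_scale_solution_def by blast
  also have "(LINT r:{u - x..u - z}|lborel. W (u - z - r) * w (u - r) * V r (u - x))
      = (LINT r:{z..x}|lborel. W (u - z - (u - r)) * w (u - (u - r)) * V (u - r) (u - x))"
    using set_integral_Icc_reflect[where a="u - x" and b="u - z" and u=u] by simp
  finally show ?thesis
    by (simp add: algebra_simps)
qed

theorem lemma2:
  fixes \<psi> W \<omega> :: "real \<Rightarrow> real" and u :: real and W\<omega> W\<omega>u :: "real \<Rightarrow> real \<Rightarrow> real"
  assumes "snlp_laplace_exponent \<psi>"
    and "scale_function \<psi> W"
    and "\<forall>z. 0 \<le> \<omega> z" and "locally_bounded \<omega>" and "\<omega> \<in> borel_measurable borel"
    and "omega_scale_solution W \<omega> W\<omega>"
    and "omega_scale_solution W (\<lambda>z. \<omega> (u - z)) W\<omega>u"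
  shows "\<forall>x y. W\<omega>u (u - y) (u - x) = W\<omega> x y"
proof (intro allI)
  fix x y :: real
  show "W\<omega>u (u - y) (u - x) = W\<omega> x y"
  proof (cases "y \<le> x")
    case False
    then show ?thesis
      using omega_scale_solution_below_diagonal[OF assms(6)]
        omega_scale_solution_below_diagonal[OF assms(7)] by simp
  next
    case True
    have "mono W"
      using assms(2) by (rule scale_function_mono)
    have lb: "locally_bounded (\<lambda>(a, b). W\<omega> a b)" "locally_bounded (\<lambda>(a, b). W\<omega>u a b)"
      and meas: "(\<lambda>a. W\<omega> a y) \<in> borel_measurable borel" "(\<lambda>a. W\<omega>u a (u - x)) \<in> borel_measurable borel"
      and forward: "\<forall>s\<in>{y..x}. W\<omega> s y = W (s - y) + (LINT r:{y..s}|lborel. W (s - r) * \<omega> r * W\<omega> r y)"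
      using assms(6,7) unfolding omega_scale_solution_def by blast+
    have backward: "\<forall>z\<in>{y..x}. W\<omega>u (u - z) (u - x)
        = W (x - z) + (LINT r:{z..x}|lborel. W\<omega>u (u - r) (u - x) * \<omega> r * W (r - z))"
      using omega_scale_solution_reflect[OF assms(7)] by blast
    have "(\<lambda>z. W\<omega>u (u - z) (u - x)) \<in> borel_measurable borel"
      by (rule measurable_compose[OF _ meas(2)]) simp
    moreover have "W \<in> borel_measurable borel"
      using \<open>mono W\<close> by (rule borel_measurable_mono)
    moreover have "bounded ((\<lambda>s. W\<omega> s y) ` {y..x})" "bounded ((\<lambda>z. W\<omega>u (u - z) (u - x)) ` {y..x})"
      using bounded_image_locally_bounded[OF lb(1) compact_Icc, where g="\<lambda>s. (s, y)"]
        bounded_image_locally_bounded[OF lb(2) compact_Icc, where g="\<lambda>z. (u - z, u - x)"]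
      by (simp_all add: continuous_intros)
    moreover have "bounded (\<omega> ` {y..x})"
      using bounded_image_locally_bounded[OF assms(4) compact_Icc continuous_on_id] by simp
    moreover have "bounded (W ` {0..x - y})"
      using \<open>mono W\<close> assms(2) unfolding scale_function_def
      by (intro bounded_subset[OF bounded_closed_interval[of 0 "W (x - y)"]]) (auto dest: monoD)
    ultimately show ?thesis
      using Volterra_forward_backward_eq[OF meas(1) _ _ assms(5) True _ _ _ _ forward backward] by simp
  qed
qed

end
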